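(* Let $\mathcal{K}$ be a Hilbert space, let $A$ be a closable, densely defined operator in $\mathcal{K}$, let $S$ be a closed densely defined operator in $\mathcal{K}$ and let $z\in\rho(S)$. Suppose that for some $m\in\mathbb{N}$, $$\mathcal{D}(S^m)\subseteq\mathcal{D}(\bar A),\qquad \mathcal{D}(S^{*m})\subseteq\mathcal{D}(A^* ).$$ Then $\mathrm{ad}((S-z)^{-1},\bar A)=(S-z)^{-1}\bar A-\bar A(S-z)^{-1}$ is a closable densely defined operator. If it is additionally bounded, then $$\|\mathrm{ad}((S-z)^{-m},\bar A)\|\le m\,\|(S-z)^{-1}\|^{m-1}\,\|\mathrm{ad}((S-z)^{-1},\bar A)\|.$$
   Context: $\rho(S)$ is the resolvent set of $S$. For operators $S,T$, $\mathrm{ad}(S,T):=ST-TS$ with natural domains. An operator $T$ is bounded if $\|Tf\|\le c\|f\|$ for all $f\in\mathcal{D}(T)$ and some $c\ge0$; $\|T\|=\sup\{\|Tf\|:f\in\mathcal{D}(T),\|f\|\le1\}$. *)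

theory Defs
  imports "HOL-Analysis.Analysis"
begin

text \<open>A complex Hilbert space is modelled by a Banach space type 'a (real normed,
complete) together with a complex scalar multiplication sc extending the real one
and an inner product ip (antilinear in the first argument) inducing the norm.\<close>

definition complex_hilbert :: "(complex \<Rightarrow> 'a::banach \<Rightarrow> 'a) \<Rightarrow> ('a \<Rightarrow> 'a \<Rightarrow> complex) \<Rightarrow> bool" where
  "complex_hilbert sc ip \<longleftrightarrow>
     (\<forall>r x. sc (complex_of_real r) x = r *\<^sub>R x) \<and>
     (\<forall>a b x. sc (a + b) x = sc a x + sc b x) \<and>
     (\<forall>a x y. sc a (x + y) = sc a x + sc a y) \<and>
     (\<forall>a b x. sc (a * b) x = sc a (sc b x)) \<and>
     (\<forall>x y w. ip (x + y) w = ip x w + ip y w) \<and>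
     (\<forall>a x y. ip (sc a x) y = cnj a * ip x y) \<and>
     (\<forall>x y. ip y x = cnj (ip x y)) \<and>
     (\<forall>x. ip x x = complex_of_real ((norm x)\<^sup>2))"

text \<open>Operators are identified with their graphs: a (not necessarily everywhere
defined) linear operator is a complex linear subspace of 'a \<times> 'a which is single valued.\<close>

definition is_op :: "(complex \<Rightarrow> 'a::banach \<Rightarrow> 'a) \<Rightarrow> ('a \<times> 'a) set \<Rightarrow> bool" where
  "is_op sc T \<longleftrightarrow> (0, 0) \<in> T \<and>
     (\<forall>x y u v. (x, y) \<in> T \<longrightarrow> (u, v) \<in> T \<longrightarrow> (x + u, y + v) \<in> T) \<and>
     (\<forall>a x y. (x, y) \<in> T \<longrightarrow> (sc a x, sc a y) \<in> T) \<and>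
     (\<forall>y. (0, y) \<in> T \<longrightarrow> y = 0)"

definition op_dom :: "('a \<times> 'a) set \<Rightarrow> 'a set" where
  "op_dom T = fst ` T"

definition densely_defined :: "('a::banach \<times> 'a) set \<Rightarrow> bool" where
  "densely_defined T \<longleftrightarrow> closure (op_dom T) = UNIV"

definition closed_op :: "(complex \<Rightarrow> 'a::banach \<Rightarrow> 'a) \<Rightarrow> ('a \<times> 'a) set \<Rightarrow> bool" where
  "closed_op sc T \<longleftrightarrow> is_op sc T \<and> closed T"

definition closable :: "(complex \<Rightarrow> 'a::banach \<Rightarrow> 'a) \<Rightarrow> ('a \<times> 'a) set \<Rightarrow> bool" where
  "closable sc T \<longleftrightarrow> is_op sc T \<and> (\<exists>B. closed_op sc B \<and> T \<subseteq> B)"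

definition op_closure :: "('a::banach \<times> 'a) set \<Rightarrow> ('a \<times> 'a) set" where
  "op_closure T = closure T"

definition adjoint :: "('a \<Rightarrow> 'a \<Rightarrow> complex) \<Rightarrow> ('a \<times> 'a) set \<Rightarrow> ('a \<times> 'a) set" where
  "adjoint ip T = {(y, w). \<forall>x v. (x, v) \<in> T \<longrightarrow> ip v y = ip x w}"

text \<open>Product ST (apply T first, then S) with natural domain.\<close>
definition op_mult :: "('a \<times> 'a) set \<Rightarrow> ('a \<times> 'a) set \<Rightarrow> ('a \<times> 'a) set" where
  "op_mult S T = T O S"

definition op_pow :: "('a \<times> 'a) set \<Rightarrow> nat \<Rightarrow> ('a \<times> 'a) set" where
  "op_pow T n = T ^^ n"

definition op_diff :: "('a::ab_group_add \<times> 'a) set \<Rightarrow> ('a \<times> 'a) set \<Rightarrow> ('a \<times> 'a) set" where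
  "op_diff S T = {(x, u - v) | x u v. (x, u) \<in> S \<and> (x, v) \<in> T}"

definition op_shift :: "(complex \<Rightarrow> 'a::banach \<Rightarrow> 'a) \<Rightarrow> ('a \<times> 'a) set \<Rightarrow> complex \<Rightarrow> ('a \<times> 'a) set" where
  "op_shift sc S z = {(x, y - sc z x) | x y. (x, y) \<in> S}"

definition op_inverse :: "('a \<times> 'a) set \<Rightarrow> ('a \<times> 'a) set" where
  "op_inverse T = converse T"

definition ad :: "('a::ab_group_add \<times> 'a) set \<Rightarrow> ('a \<times> 'a) set \<Rightarrow> ('a \<times> 'a) set" where
  "ad S T = op_diff (op_mult S T) (op_mult T S)"

definition bounded_op :: "('a::real_normed_vector \<times> 'a) set \<Rightarrow> bool" where
  "bounded_op T \<longleftrightarrow> (\<exists>c\<ge>0. \<forall>x y. (x, y) \<in> T \<longrightarrow> norm y \<le> c * norm x)"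

definition op_norm :: "('a::real_normed_vector \<times> 'a) set \<Rightarrow> real" where
  "op_norm T = Sup {norm y | x y. (x, y) \<in> T \<and> norm x \<le> 1}"

definition resolvent_set :: "(complex \<Rightarrow> 'a::banach \<Rightarrow> 'a) \<Rightarrow> ('a \<times> 'a) set \<Rightarrow> complex set" where
  "resolvent_set sc S = {z. is_op sc (op_inverse (op_shift sc S z)) \<and>
      op_dom (op_inverse (op_shift sc S z)) = UNIV \<and>
      bounded_op (op_inverse (op_shift sc S z))}"

end

theory Submission
  imports Defs
begin

text \<open>
  Write R = (S - z)^-1 and let A also denote the closure of A. On the core D = ran R^m,
  which is dense and mapped by every power of R into the domain of A, the identity
  ad(R^(j+1), A) = R^j ad(R, A) + ad(R^j, A) R gives by induction
  \<parallel>ad(R^m, A) x\<parallel> \<le> m \<parallel>R\<parallel>^(m-1) \<parallel>ad(R, A)\<parallel> \<parallel>x\<parallel>.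
  Dually R*^m = (S* - cnj z)^-m maps into the domain of A*, so for u in its range
  \<langle>ad(R^k, A) x, u\<rangle> = \<langle>x, A* R*^k u - R*^k A* u\<rangle>.
  These weak identities pass to limits of graph points, and ran R*^m is total because R^m is
  injective; hence ad(R^k, A) is closable, and the bound on the core extends to the whole domain.
  The bounded adjoint R* is obtained from the Riesz representation theorem.
\<close>

section \<open>Graphs and dense cores\<close>

lemma op_dom_eq_Domain: "op_dom T = Domain T"
  by (simp add: op_dom_def fst_eq_Domain)

lemma Domain_relpow_antimono:
  fixes T :: "('a \<times> 'a) set"
  assumes "k \<le> j"
  shows "Domain (T ^^ j) \<subseteq> Domain (T ^^ k)"
proof -
  obtain d where "j = k + d"
    using assms le_Suc_ex by blast
  show ?thesis
    unfolding \<open>j = k + d\<close> relpow_add[of k d T] by auto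
qed

lemma closure_graph_bound_from_dense_core:
  fixes T :: "('a::banach \<times> 'a) set"
  assumes dense: "closure D = UNIV"
    and D_diff: "\<And>p q. p \<in> D \<Longrightarrow> q \<in> D \<Longrightarrow> p - q \<in> D"
    and graph: "\<And>p. p \<in> D \<Longrightarrow> (p, f p) \<in> T"
    and f_diff: "\<And>p q. p \<in> D \<Longrightarrow> q \<in> D \<Longrightarrow> f (p - q) = f p - f q"
    and bound: "\<And>p. p \<in> D \<Longrightarrow> norm (f p) \<le> K * norm p"
    and "0 \<le> K"
  obtains y where "(x, y) \<in> closure T" "norm y \<le> K * norm x"
proof -
  have "x \<in> closure D"
    using dense by simp
  then obtain X where X: "\<And>n. X n \<in> D" "X \<longlonglongrightarrow> x"
    unfolding closure_sequential by blast
  have "Cauchy (\<lambda>n. f (X n))"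
    unfolding Cauchy_iff
  proof (intro allI impI)
    fix e :: real
    assume "0 < e"
    then obtain M where M: "\<And>p q. M \<le> p \<Longrightarrow> M \<le> q \<Longrightarrow> norm (X p - X q) < e / (K + 1)"
      using LIMSEQ_imp_Cauchy[OF X(2)] \<open>0 \<le> K\<close> unfolding Cauchy_iff
      by (metis add_nonneg_pos divide_pos_pos zero_less_one)
    have "norm (f (X p) - f (X q)) < e" if "M \<le> p" "M \<le> q" for p q
    proof -
      have "norm (f (X p) - f (X q)) \<le> K * norm (X p - X q)"
        using bound[OF D_diff] f_diff X(1) by metis
      also have "\<dots> \<le> K * (e / (K + 1))"
        using M[OF that] \<open>0 \<le> K\<close> by (intro mult_left_mono) auto
      also have "\<dots> < e"
        using \<open>0 < e\<close> \<open>0 \<le> K\<close> by (simp add: field_simps)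
      finally show ?thesis .
    qed
    then show "\<exists>M. \<forall>p\<ge>M. \<forall>q\<ge>M. norm (f (X p) - f (X q)) < e"
      by blast
  qed
  then obtain y where Y: "(\<lambda>n. f (X n)) \<longlonglongrightarrow> y"
    by (auto simp: Cauchy_convergent_iff convergent_def)
  show ?thesis
  proof
    show "(x, y) \<in> closure T"
      unfolding closure_sequential
      using graph X(1) tendsto_Pair[OF X(2) Y]
      by (intro exI[of _ "\<lambda>n. (X n, f (X n))"]) simp
    show "norm y \<le> K * norm x"
    proof (rule LIMSEQ_le)
      show "(\<lambda>n. norm (f (X n))) \<longlonglongrightarrow> norm y" "(\<lambda>n. K * norm (X n)) \<longlonglongrightarrow> K * norm x"
        by (intro tendsto_intros X(2) Y)+
    qed (use bound X(1) in blast)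
  qed
qed

section \<open>Hilbert spaces\<close>

locale hilbert =
  fixes sc :: "complex \<Rightarrow> 'a::banach \<Rightarrow> 'a" and ip :: "'a \<Rightarrow> 'a \<Rightarrow> complex"
  assumes complex_hilbert: "complex_hilbert sc ip"
begin

lemma sc_of_real: "sc (complex_of_real r) x = r *\<^sub>R x"
  and sc_add_right: "sc a (x + y) = sc a x + sc a y"
  and sc_mult: "sc (a * b) x = sc a (sc b x)"
  and ip_add_left: "ip (x + y) w = ip x w + ip y w"
  and ip_sc_left: "ip (sc a x) y = cnj a * ip x y"
  and ip_cnj: "ip y x = cnj (ip x y)"
  and ip_self: "ip x x = complex_of_real ((norm x)\<^sup>2)"
  using complex_hilbert unfolding complex_hilbert_def by blast+

lemma sc_zero_right [simp]: "sc a 0 = 0"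
  using sc_add_right[of a 0 0] by simp

lemma sc_minus_right: "sc a (- x) = - sc a x"
  by (metis add.right_inverse minus_unique sc_add_right sc_zero_right)

lemma sc_diff_right: "sc a (x - y) = sc a x - sc a y"
  using sc_add_right[of a x "- y"] by (simp add: sc_minus_right)

lemma sc_minus_one: "sc (- 1) x = - x"
  using sc_of_real[of "- 1" x] by simp

lemma ip_add_right: "ip w (x + y) = ip w x + ip w y"
  by (metis ip_cnj ip_add_left complex_cnj_add)

lemma ip_sc_right: "ip x (sc a y) = a * ip x y"
  by (metis ip_cnj ip_sc_left complex_cnj_mult complex_cnj_cnj)

lemma ip_zero_left [simp]: "ip 0 y = 0"
  using ip_add_left[of 0 0 y] by simp

lemma ip_zero_right [simp]: "ip y 0 = 0"
  using ip_add_right[of y 0 0] by simp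

lemma ip_diff_left: "ip (x - y) w = ip x w - ip y w"
  by (metis add_diff_cancel eq_diff_eq ip_add_left)

lemma ip_diff_right: "ip w (x - y) = ip w x - ip w y"
  by (metis add_diff_cancel eq_diff_eq ip_add_right)

lemma ip_self_eq_0_iff [simp]: "ip x x = 0 \<longleftrightarrow> x = 0"
  by (simp add: ip_self)

lemma cnj_mult_self: "cnj c * c = complex_of_real ((cmod c)\<^sup>2)"
  using complex_norm_square[of c] by (simp add: mult.commute)

lemma norm_sc: "norm (sc a x) = cmod a * norm x"
proof -
  have "complex_of_real ((norm (sc a x))\<^sup>2) = cnj a * a * complex_of_real ((norm x)\<^sup>2)"
    by (metis ip_self ip_sc_left ip_sc_right mult.assoc)
  also have "\<dots> = complex_of_real ((cmod a * norm x)\<^sup>2)"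
    by (simp add: cnj_mult_self power_mult_distrib)
  finally have "(norm (sc a x))\<^sup>2 = (cmod a * norm x)\<^sup>2"
    using of_real_eq_iff by blast
  then show ?thesis
    by (simp add: power2_eq_iff_nonneg)
qed

lemma norm_diff_sc_squared:
  "(norm (x - sc t y))\<^sup>2 = (norm x)\<^sup>2 + (cmod t)\<^sup>2 * (norm y)\<^sup>2 - 2 * Re (t * ip x y)"
proof -
  have "complex_of_real ((norm (x - sc t y))\<^sup>2) = ip (x - sc t y) (x - sc t y)"
    by (simp add: ip_self)
  also have "\<dots> = ip x x - (t * ip x y + cnj (t * ip x y)) + (t * cnj t) * ip y y"
    by (simp add: ip_diff_left ip_diff_right ip_sc_left ip_sc_right ip_cnj[of x y] algebra_simps)
  also have "\<dots> = complex_of_real ((norm x)\<^sup>2 + (cmod t)\<^sup>2 * (norm y)\<^sup>2 - 2 * Re (t * ip x y))"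
    by (simp only: ip_self complex_add_cnj complex_norm_square[symmetric]) simp
  finally show ?thesis
    using of_real_eq_iff by blast
qed

lemma parallelogram_law:
  fixes x y :: 'a
  shows "(norm (x + y))\<^sup>2 + (norm (x - y))\<^sup>2 = 2 * (norm x)\<^sup>2 + 2 * (norm y)\<^sup>2"
proof -
  have "complex_of_real ((norm (x + y))\<^sup>2 + (norm (x - y))\<^sup>2) = ip (x + y) (x + y) + ip (x - y) (x - y)"
    by (simp add: ip_self)
  also have "\<dots> = 2 * ip x x + 2 * ip y y"
    by (simp add: ip_diff_left ip_diff_right ip_add_left ip_add_right algebra_simps)
  also have "\<dots> = complex_of_real (2 * (norm x)\<^sup>2 + 2 * (norm y)\<^sup>2)"
    by (simp add: ip_self)
  finally show ?thesis
    using of_real_eq_iff by blast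
qed

lemma Re_ip_le: "Re (ip x y) \<le> norm x * norm y"
proof (cases "x = 0 \<or> y = 0")
  case True
  then show ?thesis by auto
next
  case False
  define x' where "x' = (1 / norm x) *\<^sub>R x"
  define y' where "y' = (1 / norm y) *\<^sub>R y"
  have unit: "norm x' = 1" "norm y' = 1"
    using False by (auto simp: x'_def y'_def)
  have "ip (x' + y') (x' + y') - ip (x' - y') (x' - y') = 2 * (ip x' y' + ip y' x')"
    by (simp add: ip_add_left ip_add_right ip_diff_left ip_diff_right algebra_simps)
  then have "Re (ip (x' + y') (x' + y') - ip (x' - y') (x' - y')) = 4 * Re (ip x' y')"
    by (simp add: ip_cnj[of y' x'])
  then have "4 * Re (ip x' y') = (norm (x' + y'))\<^sup>2 - (norm (x' - y'))\<^sup>2"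
    by (simp add: ip_self)
  also have "\<dots> \<le> 2\<^sup>2"
    using norm_triangle_ineq[of x' y'] unit
    by (smt (verit, best) norm_ge_zero power_mono zero_le_power2)
  finally have "Re (ip x' y') \<le> 1"
    by simp
  moreover have "ip x' y' = ip x y / complex_of_real (norm x * norm y)"
    using False by (simp add: x'_def y'_def sc_of_real[symmetric] ip_sc_left ip_sc_right)
  ultimately show ?thesis
    using False by (simp add: Re_divide_of_real divide_le_eq)
qed

lemma cauchy_schwarz: "cmod (ip x y) \<le> norm x * norm y"
proof (cases "ip x y = 0")
  case True
  then show ?thesis by simp
next
  case False
  \<comment> \<open>rotate y by the phase of the inner product\<close>
  define c where "c = cnj (ip x y) / complex_of_real (cmod (ip x y))"
  have "cmod (ip x y) = Re (ip x (sc c y))"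
    using False by (simp add: ip_sc_right c_def cnj_mult_self power2_eq_square)
  also have "\<dots> \<le> norm x * norm (sc c y)"
    by (rule Re_ip_le)
  also have "\<dots> = norm x * norm y"
    using False by (simp add: norm_sc c_def norm_divide)
  finally show ?thesis .
qed

lemma bounded_linear_sc: "bounded_linear (sc c)"
proof (rule bounded_linear_intro[where K = "cmod c"])
  show "sc c (r *\<^sub>R x) = r *\<^sub>R sc c x" for r x
    by (metis mult.commute sc_mult sc_of_real)
qed (simp_all add: sc_add_right norm_sc mult.commute)

lemma bounded_bilinear_ip: "bounded_bilinear ip"
proof
  show "ip (r *\<^sub>R x) y = r *\<^sub>R ip x y" "ip x (r *\<^sub>R y) = r *\<^sub>R ip x y" for r x y
    by (simp_all add: sc_of_real[symmetric] ip_sc_left ip_sc_right scaleR_conv_of_real)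
  show "\<exists>K. \<forall>x y. norm (ip x y) \<le> norm x * norm y * K"
    using cauchy_schwarz by (intro exI[of _ 1]) simp
qed (simp_all add: ip_add_left ip_add_right)

lemmas continuous_on_ip = bounded_bilinear.continuous_on[OF bounded_bilinear_ip]


lemma minimizing_sequence_Cauchy:
  fixes P :: "nat \<Rightarrow> 'a"
  assumes "convex N" and P: "\<And>n. P n \<in> N"
    and lower: "\<And>q. q \<in> N \<Longrightarrow> d \<le> norm (x - q)"
    and lim: "(\<lambda>n. norm (x - P n)) \<longlonglongrightarrow> d"
  shows "Cauchy P"
proof (rule CauchyI)
  fix e :: real
  assume "0 < e"
  have "0 \<le> d"
    using lim by (rule LIMSEQ_le_const) simp
  have "(\<lambda>n. (norm (x - P n))\<^sup>2) \<longlonglongrightarrow> d\<^sup>2"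
    by (intro tendsto_intros lim)
  moreover have "d\<^sup>2 < d\<^sup>2 + e\<^sup>2 / 4"
    using \<open>0 < e\<close> by simp
  ultimately obtain M where M: "\<And>n. M \<le> n \<Longrightarrow> (norm (x - P n))\<^sup>2 < d\<^sup>2 + e\<^sup>2 / 4"
    by (metis (no_types, lifting) eventually_sequentially order_tendstoD(2))
  have "norm (P m - P n) < e" if "M \<le> m" "M \<le> n" for m n
  proof -
    \<comment> \<open>the midpoint of P m and P n lies in N, hence is at distance at least d from x\<close>
    have "(1/2) *\<^sub>R P m + (1/2) *\<^sub>R P n \<in> N"
      using \<open>convex N\<close> P by (intro convexD) auto
    moreover have "(x - P m) + (x - P n) = 2 *\<^sub>R (x - ((1/2) *\<^sub>R P m + (1/2) *\<^sub>R P n))"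
      by (simp add: algebra_simps scaleR_2)
    ultimately have "2 * d \<le> norm ((x - P m) + (x - P n))"
      using lower[of "(1/2) *\<^sub>R P m + (1/2) *\<^sub>R P n"] by (simp only: norm_scaleR) simp
    then have "(2 * d)\<^sup>2 \<le> (norm ((x - P m) + (x - P n)))\<^sup>2"
      using \<open>0 \<le> d\<close> by (intro power_mono) auto
    then have "(norm (P m - P n))\<^sup>2 \<le> 2 * (norm (x - P m))\<^sup>2 + 2 * (norm (x - P n))\<^sup>2 - 4 * d\<^sup>2"
      using parallelogram_law[of "x - P m" "x - P n"] by (simp add: norm_minus_commute power_mult_distrib)
    also have "\<dots> < e\<^sup>2"
      using M[OF that(1)] M[OF that(2)] by simp
    finally show ?thesis
      using \<open>0 < e\<close> by (simp add: power_less_imp_less_base)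
  qed
  then show "\<exists>M. \<forall>m\<ge>M. \<forall>n\<ge>M. norm (P m - P n) < e"
    by blast
qed

lemma closed_convex_nearest_point:
  fixes x :: 'a
  assumes "closed N" "convex N" "N \<noteq> {}"
  obtains p where "p \<in> N" "\<And>q. q \<in> N \<Longrightarrow> norm (x - p) \<le> norm (x - q)"
proof -
  define d where "d = infdist x N"
  have lower: "d \<le> norm (x - q)" if "q \<in> N" for q
    using infdist_le[OF that, of x] by (simp add: d_def dist_norm)
  have "\<exists>p\<in>N. norm (x - p) < d + 1 / real (Suc n)" for n
  proof -
    have "(INF q\<in>N. dist x q) < d + 1 / real (Suc n)"
      using \<open>N \<noteq> {}\<close> by (simp add: d_def infdist_notempty)
    then show ?thesis
      using \<open>N \<noteq> {}\<close> by (subst (asm) cINF_less_iff) (auto simp: dist_norm intro: bdd_belowI[of _ 0])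
  qed
  then obtain P where P: "\<And>n. P n \<in> N" "\<And>n. norm (x - P n) < d + 1 / real (Suc n)"
    by metis
  have lim: "(\<lambda>n. norm (x - P n)) \<longlonglongrightarrow> d"
  proof (rule tendsto_sandwich)
    show "\<forall>\<^sub>F n in sequentially. d \<le> norm (x - P n)"
      using lower P(1) by simp
    show "\<forall>\<^sub>F n in sequentially. norm (x - P n) \<le> d + 1 / real (Suc n)"
      using P(2) by (auto intro: always_eventually less_imp_le)
    show "(\<lambda>n. d + 1 / real (Suc n)) \<longlonglongrightarrow> d"
      using tendsto_add[OF tendsto_const LIMSEQ_Suc[OF lim_inverse_n'], of d] by simp
  qed simp
  obtain p where "P \<longlonglongrightarrow> p"
    using minimizing_sequence_Cauchy[OF \<open>convex N\<close> P(1) lower lim]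
    by (auto simp: Cauchy_convergent_iff convergent_def)
  then have "p \<in> N" "(\<lambda>n. norm (x - P n)) \<longlonglongrightarrow> norm (x - p)"
    using closed_sequentially[OF \<open>closed N\<close>] P(1) by (blast, intro tendsto_intros)
  with lim lower show ?thesis
    using LIMSEQ_unique that by metis
qed

lemma nearest_point_orthogonal:
  assumes min: "\<And>t. norm e \<le> norm (e - sc t q)"
  shows "ip e q = 0"
proof (rule ccontr)
  assume nz: "ip e q \<noteq> 0"
  \<comment> \<open>moving from e towards q by a small multiple of the inner product decreases the norm\<close>
  define s where "s = 1 / ((norm q)\<^sup>2 + 1)"
  define K where "K = (cmod (ip e q))\<^sup>2"
  define t where "t = complex_of_real s * cnj (ip e q)"
  have "0 < (norm q)\<^sup>2 + 1"
    by (rule add_nonneg_pos) simp_all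
  then have s: "0 < s" "s * (norm q)\<^sup>2 < 1"
    unfolding s_def by (simp_all add: divide_less_eq)
  have "0 < K"
    using nz by (simp add: K_def)
  have "(norm e)\<^sup>2 \<le> (norm (e - sc t q))\<^sup>2"
    using min[of t] by (intro power_mono) auto
  also have "\<dots> = (norm e)\<^sup>2 + s\<^sup>2 * K * (norm q)\<^sup>2 - 2 * (s * K)"
    unfolding norm_diff_sc_squared using s
    by (simp add: t_def K_def norm_mult power_mult_distrib mult.assoc cnj_mult_self
        del: of_real_power)
  finally have "2 * (s * K) \<le> (s * K) * (s * (norm q)\<^sup>2)"
    by (simp add: power2_eq_square algebra_simps)
  then have "2 \<le> s * (norm q)\<^sup>2"
    using s \<open>0 < K\<close> by (simp add: mult_le_cancel_left_pos)
  with s show False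
    by simp
qed

lemma riesz_representation:
  fixes f :: "'a \<Rightarrow> complex"
  assumes add: "\<And>x y. f (x + y) = f x + f y"
    and scl: "\<And>c x. f (sc c x) = c * f x"
    and bnd: "\<And>x. cmod (f x) \<le> C * norm x"
  obtains w where "\<And>x. f x = ip w x"
proof (cases "\<forall>x. f x = 0")
  case True
  then show ?thesis
    using that[of 0] by simp
next
  case False
  then obtain x0 where "f x0 \<noteq> 0"
    by auto
  define N where "N = {x. f x = 0}"
  have f_lin: "bounded_linear f"
  proof (rule bounded_linear_intro[where K = C])
    show "f (r *\<^sub>R x) = r *\<^sub>R f x" for r x
      using scl[of "complex_of_real r" x] by (simp add: sc_of_real scaleR_conv_of_real)
  qed (simp_all add: add bnd mult.commute)
  have "closed N"
    unfolding N_def by (intro closed_Collect_eq continuous_intros bounded_linear.continuous_on[OF f_lin])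
  moreover have "convex N"
    unfolding N_def using convex_linear_vimage[OF bounded_linear.linear[OF f_lin] convex_singleton[of 0]]
    by (simp add: vimage_def)
  moreover have "0 \<in> N"
    using linear_0[OF bounded_linear.linear[OF f_lin]] by (simp add: N_def)
  ultimately obtain p where "p \<in> N" and p_min: "\<And>q. q \<in> N \<Longrightarrow> norm (x0 - p) \<le> norm (x0 - q)"
    by (metis closed_convex_nearest_point empty_iff)
  define e where "e = x0 - p"
  have fe: "f e \<noteq> 0"
    using \<open>f x0 \<noteq> 0\<close> \<open>p \<in> N\<close> by (simp add: e_def N_def linear_diff[OF bounded_linear.linear[OF f_lin]])
  have orth: "ip e q = 0" if "q \<in> N" for q
  proof (rule nearest_point_orthogonal)
    fix t
    have "p + sc t q \<in> N"
      using \<open>p \<in> N\<close> that by (simp add: N_def add scl)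
    then show "norm e \<le> norm (e - sc t q)"
      using p_min unfolding e_def by (simp add: diff_diff_eq)
  qed
  have ee: "ip e e \<noteq> 0"
    using fe linear_0[OF bounded_linear.linear[OF f_lin]] by auto
  show ?thesis
  proof (rule that)
    fix x
    \<comment> \<open>f x \<cdot> e - f e \<cdot> x lies in the kernel, hence is orthogonal to e\<close>
    have "sc (f x) e - sc (f e) x \<in> N"
      by (simp add: N_def linear_diff[OF bounded_linear.linear[OF f_lin]] scl)
    then have "ip e (sc (f x) e - sc (f e) x) = 0"
      by (rule orth)
    then have "f x * ip e e = f e * ip e x"
      by (simp add: ip_diff_right ip_sc_right)
    moreover have "cnj (ip e e) = ip e e"
      by (simp add: ip_self)
    ultimately show "f x = ip (sc (cnj (f e) / ip e e) e) x"
      using ee by (simp add: ip_sc_left field_simps)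
  qed
qed


definition linear_rel :: "('a \<times> 'a) set \<Rightarrow> bool" where
  "linear_rel T \<longleftrightarrow> (0, 0) \<in> T \<and>
     (\<forall>x y u v. (x, y) \<in> T \<longrightarrow> (u, v) \<in> T \<longrightarrow> (x + u, y + v) \<in> T) \<and>
     (\<forall>a x y. (x, y) \<in> T \<longrightarrow> (sc a x, sc a y) \<in> T)"

lemma is_op_iff_linear_rel: "is_op sc T \<longleftrightarrow> linear_rel T \<and> (\<forall>y. (0, y) \<in> T \<longrightarrow> y = 0)"
  unfolding is_op_def linear_rel_def by blast

lemma linear_rel_zero: "linear_rel T \<Longrightarrow> (0, 0) \<in> T"
  and linear_rel_add: "linear_rel T \<Longrightarrow> (x, y) \<in> T \<Longrightarrow> (u, v) \<in> T \<Longrightarrow> (x + u, y + v) \<in> T"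
  and linear_rel_sc: "linear_rel T \<Longrightarrow> (x, y) \<in> T \<Longrightarrow> (sc a x, sc a y) \<in> T"
  by (simp_all add: linear_rel_def)

lemma linear_rel_diff:
  assumes "linear_rel T" "(x, y) \<in> T" "(u, v) \<in> T"
  shows "(x - u, y - v) \<in> T"
  using linear_rel_add[OF assms(1,2) linear_rel_sc[OF assms(1,3), of "- 1"]]
  by (simp add: sc_minus_one)

lemma is_op_single_valued:
  assumes "is_op sc T" "(x, y) \<in> T" "(x, y') \<in> T"
  shows "y = y'"
proof -
  have "(0, y - y') \<in> T"
    using linear_rel_diff[of T x y x y'] assms by (simp add: is_op_iff_linear_rel)
  then have "y - y' = 0"
    using assms(1) unfolding is_op_def by blast
  then show ?thesis
    by simp
qed

lemma is_op_the_eq: "is_op sc T \<Longrightarrow> (x, y) \<in> T \<Longrightarrow> (THE y. (x, y) \<in> T) = y"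
  by (blast intro: is_op_single_valued)

lemma linear_rel_relcomp:
  assumes T: "linear_rel T" and T': "linear_rel T'"
  shows "linear_rel (T O T')"
  unfolding linear_rel_def
proof (intro conjI allI impI)
  show "(0, 0) \<in> T O T'"
    using linear_rel_zero[OF T] linear_rel_zero[OF T'] by blast
next
  fix x y u v
  assume "(x, y) \<in> T O T'" "(u, v) \<in> T O T'"
  then obtain p q where "(x, p) \<in> T" "(p, y) \<in> T'" "(u, q) \<in> T" "(q, v) \<in> T'"
    by blast
  then show "(x + u, y + v) \<in> T O T'"
    using linear_rel_add[OF T, of x p u q] linear_rel_add[OF T', of p y q v] by blast
next
  fix a x y
  assume "(x, y) \<in> T O T'"
  then obtain p where "(x, p) \<in> T" "(p, y) \<in> T'"
    by blast
  then show "(sc a x, sc a y) \<in> T O T'"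
    using linear_rel_sc[OF T, of x p a] linear_rel_sc[OF T', of p y a] by blast
qed

lemma is_op_relcomp:
  assumes "is_op sc T" "is_op sc T'"
  shows "is_op sc (T O T')"
proof -
  have "linear_rel (T O T')"
    using assms by (intro linear_rel_relcomp) (simp_all add: is_op_iff_linear_rel)
  moreover have "y = 0" if "(0, y) \<in> T O T'" for y
    using that assms unfolding is_op_def by blast
  ultimately show ?thesis
    by (simp add: is_op_iff_linear_rel)
qed

lemma linear_rel_Id: "linear_rel Id"
  by (simp add: linear_rel_def)

lemma linear_rel_relpow: "linear_rel T \<Longrightarrow> linear_rel (T ^^ k)"
  by (induction k) (simp_all add: linear_rel_Id linear_rel_relcomp)

lemma is_op_relpow: "is_op sc T \<Longrightarrow> is_op sc (T ^^ k)"
proof (induction k)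
  case 0
  then show ?case
    by (simp add: is_op_iff_linear_rel linear_rel_Id)
next
  case (Suc k)
  then show ?case
    by (simp add: is_op_relcomp)
qed

lemma is_op_op_diff:
  assumes "is_op sc T" "is_op sc T'"
  shows "is_op sc (op_diff T T')"
proof -
  have T: "linear_rel T" and T': "linear_rel T'"
    and single: "\<And>y. (0, y) \<in> T \<Longrightarrow> y = 0" "\<And>y. (0, y) \<in> T' \<Longrightarrow> y = 0"
    using assms by (simp_all add: is_op_iff_linear_rel)
  show ?thesis
    unfolding is_op_iff_linear_rel linear_rel_def op_diff_def
  proof (intro conjI allI impI)
    show "(0, 0) \<in> {(x, u - v) |x u v. (x, u) \<in> T \<and> (x, v) \<in> T'}"
      using linear_rel_zero[OF T] linear_rel_zero[OF T'] by force
  next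
    fix x y u v
    assume "(x, y) \<in> {(x, u - v) |x u v. (x, u) \<in> T \<and> (x, v) \<in> T'}"
      "(u, v) \<in> {(x, u - v) |x u v. (x, u) \<in> T \<and> (x, v) \<in> T'}"
    then obtain p q p' q' where "y = p - q" "(x, p) \<in> T" "(x, q) \<in> T'"
      "v = p' - q'" "(u, p') \<in> T" "(u, q') \<in> T'"
      by blast
    then show "(x + u, y + v) \<in> {(x, u - v) |x u v. (x, u) \<in> T \<and> (x, v) \<in> T'}"
      using linear_rel_add[OF T, of x p u p'] linear_rel_add[OF T', of x q u q']
      by (auto intro!: exI[of _ "p + p'"] exI[of _ "q + q'"] simp: algebra_simps)
  next
    fix a x y
    assume "(x, y) \<in> {(x, u - v) |x u v. (x, u) \<in> T \<and> (x, v) \<in> T'}"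
    then obtain p q where "y = p - q" "(x, p) \<in> T" "(x, q) \<in> T'"
      by blast
    then show "(sc a x, sc a y) \<in> {(x, u - v) |x u v. (x, u) \<in> T \<and> (x, v) \<in> T'}"
      using linear_rel_sc[OF T, of x p a] linear_rel_sc[OF T', of x q a] by (auto simp: sc_diff_right)
  next
    fix y
    assume "(0, y) \<in> {(x, u - v) |x u v. (x, u) \<in> T \<and> (x, v) \<in> T'}"
    then show "y = 0"
      using single by force
  qed
qed

lemma linear_rel_closure:
  assumes T: "linear_rel T"
  shows "linear_rel (closure T)"
  unfolding linear_rel_def
proof (intro conjI allI impI)
  show "(0, 0) \<in> closure T"
    using linear_rel_zero[OF T] closure_subset by blast
next
  fix x y u v
  assume "(x, y) \<in> closure T" "(u, v) \<in> closure T"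
  then have "((x, y), (u, v)) \<in> closure (T \<times> T)"
    by (simp add: closure_Times)
  moreover have "(\<lambda>(p, q). p + q) ` closure (T \<times> T) \<subseteq> closure T"
    using linear_rel_add[OF T] closure_subset[of T]
    by (intro image_closure_subset) (auto intro!: continuous_intros simp: split_beta)
  ultimately show "(x + u, y + v) \<in> closure T"
    by force
next
  fix a x y
  assume "(x, y) \<in> closure T"
  moreover have "(\<lambda>(x, y). (sc a x, sc a y)) ` closure T \<subseteq> closure T"
    using linear_rel_sc[OF T] closure_subset[of T]
    by (intro image_closure_subset)
      (auto intro!: continuous_intros bounded_linear.continuous_on[OF bounded_linear_sc] simp: split_beta)
  ultimately show "(sc a x, sc a y) \<in> closure T"
    by force
qed

lemma is_op_closure:
  assumes "is_op sc T" "\<And>y. (0, y) \<in> closure T \<Longrightarrow> y = 0"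
  shows "is_op sc (closure T)"
  using assms linear_rel_closure by (simp add: is_op_iff_linear_rel)

lemma Domain_add: "linear_rel T \<Longrightarrow> x \<in> Domain T \<Longrightarrow> y \<in> Domain T \<Longrightarrow> x + y \<in> Domain T"
  by (blast dest: linear_rel_add)

lemma Domain_sc: "linear_rel T \<Longrightarrow> x \<in> Domain T \<Longrightarrow> sc c x \<in> Domain T"
  by (blast dest: linear_rel_sc)


text \<open>The hypothesis on g says (T - c) g = id.\<close>

lemma right_inverse_Domain_relpow_Suc:
  assumes T: "linear_rel T" and g: "\<And>y. (g y, y + sc c (g y)) \<in> T"
  shows "y \<in> Domain (T ^^ k) \<Longrightarrow> g y \<in> Domain (T ^^ Suc k)"
proof (induction k arbitrary: y)
  case 0
  then show ?case
    using g by auto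
next
  case (Suc k)
  have "y \<in> Domain (T ^^ k)"
    using Suc.prems Domain_relpow_antimono[of k "Suc k" T] by auto
  then have "g y \<in> Domain (T ^^ Suc k)"
    by (rule Suc.IH)
  then have "y + sc c (g y) \<in> Domain (T ^^ Suc k)"
    using Suc.prems linear_rel_relpow[OF T] by (intro Domain_add Domain_sc)
  then have "g y \<in> Domain (T O T ^^ Suc k)"
    using g by blast
  then show ?case
    by (simp only: relpow_commute relpow.simps(2)[of "Suc k"])
qed

lemma funpow_right_inverse_in_Domain_relpow:
  assumes "linear_rel T" "\<And>y. (g y, y + sc c (g y)) \<in> T"
  shows "(g ^^ j) y \<in> Domain (T ^^ j)"
proof (induction j)
  case (Suc j)
  then show ?case
    using right_inverse_Domain_relpow_Suc[OF assms] by (simp del: relpow.simps)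
qed auto


lemma op_norm_bdd:
  assumes "bounded_op T"
  shows "bdd_above {norm y | x y. (x, y) \<in> T \<and> norm x \<le> 1}"
proof -
  obtain c where "c \<ge> 0" "\<And>x y. (x, y) \<in> T \<Longrightarrow> norm y \<le> c * norm x"
    using assms by (auto simp: bounded_op_def)
  then show ?thesis
    by (intro bdd_aboveI[of _ c]) (force intro: order_trans mult_left_le)
qed

lemma norm_le_op_norm:
  assumes "is_op sc T" "bounded_op T" "(x, y) \<in> T"
  shows "norm y \<le> op_norm T * norm x"
proof (cases "x = 0")
  case True
  then show ?thesis
    using assms by (simp add: is_op_def)
next
  case False
  define s where "s = 1 / norm x"
  have "(s *\<^sub>R x, s *\<^sub>R y) \<in> T"
    using assms linear_rel_sc[of T x y "complex_of_real s"] by (simp add: is_op_iff_linear_rel sc_of_real)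
  moreover have "norm (s *\<^sub>R x) \<le> 1"
    using False by (simp add: s_def)
  ultimately have "norm (s *\<^sub>R y) \<in> {norm y | x y. (x, y) \<in> T \<and> norm x \<le> 1}"
    by blast
  then have "norm (s *\<^sub>R y) \<le> op_norm T"
    unfolding op_norm_def by (rule cSup_upper[OF _ op_norm_bdd[OF assms(2)]])
  then show ?thesis
    using False by (simp add: s_def field_simps)
qed

lemma op_norm_nonneg:
  assumes "is_op sc T" "bounded_op T"
  shows "0 \<le> op_norm T"
proof -
  have "(0, 0) \<in> T"
    using assms(1) by (simp add: is_op_def)
  then have "norm (0::'a) \<in> {norm y | x y. (x, y) \<in> T \<and> norm x \<le> 1}"
    by force
  then have "norm (0::'a) \<le> op_norm T"
    unfolding op_norm_def by (rule cSup_upper[OF _ op_norm_bdd[OF assms(2)]])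
  then show ?thesis
    by simp
qed

lemma op_norm_le:
  assumes "is_op sc T" "0 \<le> K" "\<And>x y. (x, y) \<in> T \<Longrightarrow> norm y \<le> K * norm x"
  shows "op_norm T \<le> K"
  unfolding op_norm_def
proof (rule cSup_least)
  show "{norm y |x y. (x, y) \<in> T \<and> norm x \<le> 1} \<noteq> {}"
    using assms(1) by (force simp: is_op_def)
qed (use assms(2,3) in \<open>force intro: order_trans mult_left_le\<close>)

lemma closed_weak_graph: "closed {(x, y). \<forall>u\<in>U. ip y u = ip x (W u)}"
proof -
  have "{(x, y). \<forall>u\<in>U. ip y u = ip x (W u)} = (\<Inter>u\<in>U. {p. ip (snd p) u = ip (fst p) (W u)})"
    by auto
  then show ?thesis
    by (auto intro!: closed_Collect_eq continuous_on_ip continuous_intros)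
qed


lemma linear_rel_adjoint: "linear_rel (adjoint ip T)"
  by (simp add: linear_rel_def adjoint_def ip_add_right ip_sc_right)

lemma adjoint_closure: "adjoint ip (closure T) = adjoint ip T"
proof
  show "adjoint ip (closure T) \<subseteq> adjoint ip T"
    using closure_subset[of T] by (auto simp: adjoint_def)
next
  show "adjoint ip T \<subseteq> adjoint ip (closure T)"
  proof (clarify)
    fix u w
    assume "(u, w) \<in> adjoint ip T"
    then have "T \<subseteq> {(x, v). \<forall>u'\<in>{u}. ip v u' = ip x ((\<lambda>_. w) u')}"
      by (auto simp: adjoint_def)
    then have "closure T \<subseteq> {(x, v). \<forall>u'\<in>{u}. ip v u' = ip x ((\<lambda>_. w) u')}"
      by (rule closure_minimal[OF _ closed_weak_graph])
    then show "(u, w) \<in> adjoint ip (closure T)"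
      by (auto simp: adjoint_def)
  qed
qed

end

section \<open>The resolvent and its adjoint\<close>

locale resolvent = hilbert +
  fixes S :: "('a \<times> 'a) set" and z :: complex
  assumes S_op: "is_op sc S" and S_dense: "densely_defined S"
    and z_resolvent: "z \<in> resolvent_set sc S"
begin

definition R :: "('a \<times> 'a) set" where
  "R = op_inverse (op_shift sc S z)"

text \<open>r is R as a function and rs its Hilbert space adjoint, the functional analogue of
  (S* - cnj z)^-1.\<close>

definition r :: "'a \<Rightarrow> 'a" where
  "r x = (THE y. (x, y) \<in> R)"

definition rs :: "'a \<Rightarrow> 'a" where
  "rs y = (SOME w. \<forall>x. ip (r x) y = ip x w)"

lemma R_op: "is_op sc R" and Domain_R: "Domain R = UNIV" and R_bounded: "bounded_op R"
  using z_resolvent by (simp_all add: resolvent_set_def R_def op_dom_eq_Domain)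

lemma R_iff: "(x, y) \<in> R \<longleftrightarrow> y = r x"
proof -
  obtain y' where "(x, y') \<in> R"
    using Domain_R by blast
  then show ?thesis
    using is_op_single_valued[OF R_op] is_op_the_eq[OF R_op] by (auto simp: r_def)
qed

lemma R_graph: "(x, r x) \<in> R"
  by (simp add: R_iff)

lemma shift_S_iff_R: "(x, v) \<in> S \<longleftrightarrow> (v - sc z x, x) \<in> R"
  unfolding R_def op_inverse_def op_shift_def by (auto simp: algebra_simps)

lemma r_in_S: "(r x, x + sc z (r x)) \<in> S"
  using R_graph[of x] by (simp add: shift_S_iff_R)

lemma r_shift_S: "(x, v) \<in> S \<Longrightarrow> r (v - sc z x) = x"
  by (simp add: shift_S_iff_R R_iff)

lemma linear_rel_R: "linear_rel R"
  using R_op by (simp add: is_op_iff_linear_rel)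

lemma r_add: "r (x + y) = r x + r y"
  using linear_rel_add[OF linear_rel_R R_graph R_graph] by (simp add: R_iff)

lemma r_sc: "r (sc c x) = sc c (r x)"
  using linear_rel_sc[OF linear_rel_R R_graph] by (simp add: R_iff)

lemma r_diff: "r (x - y) = r x - r y"
  using linear_rel_diff[OF linear_rel_R R_graph R_graph] by (simp add: R_iff)

lemma r_eq_0_iff [simp]: "r v = 0 \<longleftrightarrow> v = 0"
proof
  assume "r v = 0"
  then show "v = 0"
    using r_in_S[of v] S_op by (simp add: is_op_def)
qed (use r_diff[of 0 0] in simp)

lemma norm_r_le: "norm (r x) \<le> op_norm R * norm x"
  by (rule norm_le_op_norm[OF R_op R_bounded R_graph])

lemma op_norm_R_nonneg: "0 \<le> op_norm R"
  by (rule op_norm_nonneg[OF R_op R_bounded])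

lemma bounded_linear_r: "bounded_linear r"
proof (rule bounded_linear_intro[where K = "op_norm R"])
  show "r (c *\<^sub>R x) = c *\<^sub>R r x" for c x
    using r_sc[of "complex_of_real c" x] by (simp add: sc_of_real)
qed (simp_all add: r_add norm_r_le[unfolded mult.commute[of "op_norm R"]])

lemma relpow_R_iff: "(x, y) \<in> R ^^ k \<longleftrightarrow> y = (r ^^ k) x"
  by (induction k arbitrary: y) (auto simp: R_iff)

lemma funpow_r_diff: "(r ^^ k) (x - y) = (r ^^ k) x - (r ^^ k) y"
  by (induction k) (simp_all add: r_diff)

lemma funpow_r_eq_0_iff: "(r ^^ k) v = 0 \<longleftrightarrow> v = 0"
  by (induction k) simp_all

lemma norm_funpow_r_le: "norm ((r ^^ k) x) \<le> op_norm R ^ k * norm x"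
proof (induction k)
  case (Suc k)
  have "norm ((r ^^ Suc k) x) \<le> op_norm R * norm ((r ^^ k) x)"
    using norm_r_le by simp
  also have "\<dots> \<le> op_norm R * (op_norm R ^ k * norm x)"
    by (rule mult_left_mono[OF Suc.IH op_norm_R_nonneg])
  finally show ?case
    by (simp add: mult.assoc)
qed simp

lemma closure_range_r: "closure (range r) = UNIV"
proof -
  have "Domain S \<subseteq> range r"
  proof
    fix x
    assume "x \<in> Domain S"
    then obtain v where "(x, v) \<in> S"
      by blast
    then show "x \<in> range r"
      using r_shift_S by (metis rangeI)
  qed
  then have "closure (Domain S) \<subseteq> closure (range r)"
    by (rule closure_mono)
  then show ?thesis
    using S_dense by (auto simp: densely_defined_def op_dom_eq_Domain)
qed

lemma dense_range_funpow_r: "closure (range (r ^^ k)) = UNIV"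
proof (induction k)
  case (Suc k)
  have "r ` closure (range (r ^^ k)) \<subseteq> closure (r ` range (r ^^ k))"
    by (intro image_closure_subset bounded_linear.continuous_on[OF bounded_linear_r]
        continuous_on_id closed_closure closure_subset)
  then have "range r \<subseteq> closure (range (r ^^ Suc k))"
    using Suc.IH by (simp add: image_comp)
  then have "closure (range r) \<subseteq> closure (range (r ^^ Suc k))"
    by (rule closure_minimal) simp
  then show ?case
    using closure_range_r by auto
qed simp

lemma ip_r_rs: "ip (r x) y = ip x (rs y)"
proof -
  obtain w where "\<And>x. ip y (r x) = ip w x"
  proof (rule riesz_representation)
    show "cmod (ip y (r x)) \<le> norm y * op_norm R * norm x" for x
      using cauchy_schwarz[of y "r x"] mult_left_mono[OF norm_r_le norm_ge_zero, of y x]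
      by (simp add: mult.assoc)
  qed (simp_all add: r_add r_sc ip_add_right ip_sc_right)
  then have "\<exists>w. \<forall>x. ip (r x) y = ip x w"
    by (metis ip_cnj)
  then show ?thesis
    unfolding rs_def by (rule someI_ex[THEN spec])
qed

lemma ip_funpow_r_rs: "ip ((r ^^ k) x) y = ip x ((rs ^^ k) y)"
proof (induction k arbitrary: y)
  case (Suc k)
  have "ip ((r ^^ Suc k) x) y = ip ((r ^^ k) x) (rs y)"
    by (simp add: ip_r_rs)
  also have "\<dots> = ip x ((rs ^^ Suc k) y)"
    by (simp only: Suc.IH funpow_Suc_right comp_def)
  finally show ?case .
qed simp

lemma rs_in_adjoint_S: "(rs y, y + sc (cnj z) (rs y)) \<in> adjoint ip S"
  unfolding adjoint_def
proof (clarify)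
  fix x v
  assume "(x, v) \<in> S"
  then have "ip x y = ip (v - sc z x) (rs y)"
    using ip_r_rs r_shift_S by metis
  then show "ip v (rs y) = ip x (y + sc (cnj z) (rs y))"
    by (simp add: ip_diff_left ip_sc_left ip_add_right ip_sc_right)
qed

lemma funpow_r_in_Domain: "(r ^^ j) y \<in> Domain (S ^^ j)"
  using S_op r_in_S by (intro funpow_right_inverse_in_Domain_relpow) (simp_all add: is_op_iff_linear_rel)

lemma funpow_rs_in_Domain: "(rs ^^ j) y \<in> Domain (adjoint ip S ^^ j)"
  using linear_rel_adjoint rs_in_adjoint_S by (rule funpow_right_inverse_in_Domain_relpow)

text \<open>If v \<bottom> ran R*^k then \<langle>R^k v, R^k v\<rangle> = \<langle>v, R*^k R^k v\<rangle> = 0, and R^k is injective.\<close>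

lemma orthogonal_range_funpow_rs:
  assumes "\<And>t. ip v ((rs ^^ k) t) = 0"
  shows "v = 0"
  using assms[of "(r ^^ k) v"] by (simp add: ip_funpow_r_rs[symmetric] funpow_r_eq_0_iff)

end

section \<open>Commutators with powers of the resolvent\<close>

locale resolvent_commutator = resolvent +
  fixes A :: "('a \<times> 'a) set" and m :: nat
  assumes A_closable: "closable sc A"
    and Domain_S_pow: "Domain (S ^^ m) \<subseteq> Domain (closure A)"
    and Domain_adjoint_S_pow: "Domain (adjoint ip S ^^ m) \<subseteq> Domain (adjoint ip A)"
begin

text \<open>a is the closure of A as a function and as a choice of A*; both are junk outside the
  respective domains.\<close>

definition a :: "'a \<Rightarrow> 'a" where
  "a x = (THE y. (x, y) \<in> closure A)"

definition as :: "'a \<Rightarrow> 'a" where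
  "as u = (SOME w. (u, w) \<in> adjoint ip A)"

definition commutator :: "nat \<Rightarrow> 'a \<Rightarrow> 'a" where
  "commutator k x = (r ^^ k) (a x) - a ((r ^^ k) x)"

definition adjoint_commutator :: "nat \<Rightarrow> 'a \<Rightarrow> 'a" where
  "adjoint_commutator k u = as ((rs ^^ k) u) - (rs ^^ k) (as u)"

lemma closure_A_op: "is_op sc (closure A)"
proof (rule is_op_closure)
  obtain B where "closed_op sc B" "A \<subseteq> B"
    using A_closable by (auto simp: closable_def)
  then have "closure A \<subseteq> B" "is_op sc B"
    by (simp_all add: closure_minimal closed_op_def)
  then show "y = 0" if "(0, y) \<in> closure A" for y
    using that by (auto simp: is_op_def)
qed (use A_closable in \<open>simp add: closable_def\<close>)

lemma closure_A_eq: "(x, y) \<in> closure A \<Longrightarrow> a x = y"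
  unfolding a_def by (rule is_op_the_eq[OF closure_A_op])

lemma closure_A_graph: "x \<in> Domain (closure A) \<Longrightarrow> (x, a x) \<in> closure A"
  using closure_A_eq by blast

lemma a_diff:
  assumes "x \<in> Domain (closure A)" "y \<in> Domain (closure A)"
  shows "a (x - y) = a x - a y"
  using closure_A_op linear_rel_diff[OF _ closure_A_graph closure_A_graph, OF _ assms]
  by (simp add: closure_A_eq is_op_iff_linear_rel)

lemma as_in_adjoint_A: "u \<in> Domain (adjoint ip A) \<Longrightarrow> (u, as u) \<in> adjoint ip A"
  unfolding as_def by (rule someI_ex) blast

lemma funpow_r_core_in_Domain_A: "(r ^^ k) ((r ^^ m) t) \<in> Domain (closure A)"
proof -
  have "(r ^^ k) ((r ^^ m) t) = (r ^^ (k + m)) t"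
    by (simp add: funpow_add)
  also have "\<dots> \<in> Domain (S ^^ m)"
    by (rule subsetD[OF Domain_relpow_antimono funpow_r_in_Domain]) simp
  finally show ?thesis
    using Domain_S_pow by blast
qed

lemma funpow_rs_core_in_Domain_adjoint_A: "(rs ^^ k) ((rs ^^ m) t) \<in> Domain (adjoint ip A)"
proof -
  have "(rs ^^ k) ((rs ^^ m) t) = (rs ^^ (k + m)) t"
    by (simp add: funpow_add)
  also have "\<dots> \<in> Domain (adjoint ip S ^^ m)"
    by (rule subsetD[OF Domain_relpow_antimono funpow_rs_in_Domain]) simp
  finally show ?thesis
    using Domain_adjoint_S_pow by blast
qed

lemma ad_relpow_R_iff:
  "(x, y) \<in> ad (R ^^ k) (closure A) \<longleftrightarrow>
     x \<in> Domain (closure A) \<and> (r ^^ k) x \<in> Domain (closure A) \<and> y = commutator k x"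
proof -
  have AR: "(x, u) \<in> closure A O R ^^ k \<longleftrightarrow> x \<in> Domain (closure A) \<and> u = (r ^^ k) (a x)" for u
    by (metis DomainI closure_A_eq closure_A_graph relcomp.simps relpow_R_iff)
  have RA: "(x, v) \<in> R ^^ k O closure A \<longleftrightarrow> (r ^^ k) x \<in> Domain (closure A) \<and> v = a ((r ^^ k) x)" for v
    by (metis DomainI closure_A_eq closure_A_graph relcomp.simps relpow_R_iff)
  have "(x, y) \<in> ad (R ^^ k) (closure A) \<longleftrightarrow>
      (\<exists>u v. y = u - v \<and> (x, u) \<in> closure A O R ^^ k \<and> (x, v) \<in> R ^^ k O closure A)"
    unfolding ad_def op_diff_def op_mult_def by blast
  then show ?thesis
    unfolding AR RA commutator_def by blast
qed

lemma ip_commutator: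
  assumes "x \<in> Domain (closure A)" "(r ^^ k) x \<in> Domain (closure A)"
    and "u \<in> Domain (adjoint ip A)" "(rs ^^ k) u \<in> Domain (adjoint ip A)"
  shows "ip (commutator k x) u = ip x (adjoint_commutator k u)"
proof -
  have "ip (a x') u' = ip x' (as u')"
    if "x' \<in> Domain (closure A)" "u' \<in> Domain (adjoint ip A)" for x' u'
  proof -
    have "(u', as u') \<in> adjoint ip (closure A)"
      using as_in_adjoint_A[OF that(2)] by (simp add: adjoint_closure)
    moreover have "(x', a x') \<in> closure A"
      using that(1) by (rule closure_A_graph)
    ultimately show ?thesis
      unfolding adjoint_def by blast
  qed
  with assms show ?thesis
    by (simp add: commutator_def adjoint_commutator_def ip_diff_left ip_diff_right ip_funpow_r_rs)
qed

text \<open>The weak form of ad(R^k, A), tested against the total set ran R*^m; it is closed, so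
  it contains the closure of ad(R^k, A).\<close>

abbreviation weak_graph :: "nat \<Rightarrow> ('a \<times> 'a) set" where
  "weak_graph k \<equiv> {(x, y). \<forall>u\<in>range (rs ^^ m). ip y u = ip x (adjoint_commutator k u)}"

lemma closure_ad_subset_weak_graph: "closure (ad (R ^^ k) (closure A)) \<subseteq> weak_graph k"
proof (rule closure_minimal[OF _ closed_weak_graph], clarify)
  fix x y t
  assume "(x, y) \<in> ad (R ^^ k) (closure A)"
  then have "x \<in> Domain (closure A)" "(r ^^ k) x \<in> Domain (closure A)" "y = commutator k x"
    by (simp_all add: ad_relpow_R_iff)
  moreover have "(rs ^^ m) t \<in> Domain (adjoint ip A)" "(rs ^^ k) ((rs ^^ m) t) \<in> Domain (adjoint ip A)"
    using funpow_rs_core_in_Domain_adjoint_A[of 0 t] funpow_rs_core_in_Domain_adjoint_A[of k t] by simp_all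
  ultimately show "ip y ((rs ^^ m) t) = ip x (adjoint_commutator k ((rs ^^ m) t))"
    using ip_commutator by blast
qed

lemma weak_graph_single_valued:
  assumes "(x, y) \<in> weak_graph k" "(x, y') \<in> weak_graph k"
  shows "y = y'"
proof -
  have "ip (y - y') ((rs ^^ m) t) = 0" for t
    using assms by (simp add: ip_diff_left)
  then have "y - y' = 0"
    by (rule orthogonal_range_funpow_rs)
  then show ?thesis
    by simp
qed

lemma is_op_ad: "is_op sc (ad (R ^^ k) (closure A))"
  unfolding ad_def op_mult_def
  by (intro is_op_op_diff is_op_relcomp is_op_relpow R_op closure_A_op)

lemma closable_ad: "closable sc (ad (R ^^ k) (closure A))"
proof -
  have "y = 0" if "(0, y) \<in> closure (ad (R ^^ k) (closure A))" for y
  proof (rule weak_graph_single_valued)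
    show "(0, y) \<in> weak_graph k"
      using that closure_ad_subset_weak_graph by blast
  qed simp
  then have "closed_op sc (closure (ad (R ^^ k) (closure A)))"
    by (simp add: closed_op_def is_op_closure[OF is_op_ad])
  then show ?thesis
    unfolding closable_def using is_op_ad closure_subset by blast
qed

lemma densely_defined_ad: "densely_defined (ad (R ^^ k) (closure A))"
proof -
  have "range (r ^^ m) \<subseteq> Domain (ad (R ^^ k) (closure A))"
  proof
    fix x
    assume "x \<in> range (r ^^ m)"
    then obtain t where "x = (r ^^ m) t"
      by blast
    then have "(x, commutator k x) \<in> ad (R ^^ k) (closure A)"
      using funpow_r_core_in_Domain_A[of 0 t] funpow_r_core_in_Domain_A[of k t]
      by (simp add: ad_relpow_R_iff)
    then show "x \<in> Domain (ad (R ^^ k) (closure A))"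
      by blast
  qed
  then have "closure (range (r ^^ m)) \<subseteq> closure (Domain (ad (R ^^ k) (closure A)))"
    by (rule closure_mono)
  then show ?thesis
    using dense_range_funpow_r[of m] by (auto simp: densely_defined_def op_dom_eq_Domain)
qed


lemma is_op_ad_R: "is_op sc (ad R (closure A))"
  using is_op_ad[of 1] by simp

lemma ad_R_iff:
  "(x, y) \<in> ad R (closure A) \<longleftrightarrow> x \<in> Domain (closure A) \<and> r x \<in> Domain (closure A) \<and> y = commutator 1 x"
  using ad_relpow_R_iff[of x y 1] by simp

lemma commutator_diff:
  assumes "x \<in> Domain (closure A)" "y \<in> Domain (closure A)"
    and "(r ^^ k) x \<in> Domain (closure A)" "(r ^^ k) y \<in> Domain (closure A)"
  shows "commutator k (x - y) = commutator k x - commutator k y"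
  using assms by (simp add: commutator_def a_diff funpow_r_diff)

lemma commutator_Suc: "commutator (Suc j) x = (r ^^ j) (commutator 1 x) + commutator j (r x)"
  by (simp add: commutator_def funpow_r_diff funpow_Suc_right del: funpow.simps(2))

lemma norm_commutator_le:
  assumes bounded: "bounded_op (ad R (closure A))"
    and core: "\<And>k. (r ^^ k) x \<in> Domain (closure A)"
  shows "norm (commutator j x) \<le> real j * op_norm R ^ (j - 1) * op_norm (ad R (closure A)) * norm x"
  using core
proof (induction j arbitrary: x)
  case (Suc j)
  define c where "c = op_norm (ad R (closure A))"
  have "0 \<le> c"
    using op_norm_nonneg[OF is_op_ad_R bounded] by (simp add: c_def)
  have "(x, commutator 1 x) \<in> ad R (closure A)"
    using Suc.prems[of 0] Suc.prems[of 1] by (simp add: ad_R_iff)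
  then have "norm (commutator 1 x) \<le> c * norm x"
    unfolding c_def using norm_le_op_norm[OF is_op_ad_R bounded] by simp
  then have "norm ((r ^^ j) (commutator 1 x)) \<le> op_norm R ^ j * (c * norm x)"
    using norm_funpow_r_le[of j] by (meson mult_left_mono op_norm_R_nonneg order_trans zero_le_power)
  moreover have "norm (commutator j (r x)) \<le> real j * op_norm R ^ (j - 1) * c * (op_norm R * norm x)"
  proof -
    have "(r ^^ k) (r x) \<in> Domain (closure A)" for k
      using Suc.prems[of "Suc k"] by (simp only: funpow_Suc_right comp_def)
    then have "norm (commutator j (r x)) \<le> real j * op_norm R ^ (j - 1) * c * norm (r x)"
      using Suc.IH unfolding c_def by blast
    also have "\<dots> \<le> real j * op_norm R ^ (j - 1) * c * (op_norm R * norm x)"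
      using \<open>0 \<le> c\<close> op_norm_R_nonneg by (intro mult_left_mono norm_r_le) simp_all
    finally show ?thesis .
  qed
  moreover have "op_norm R ^ j * (c * norm x) + real j * op_norm R ^ (j - 1) * c * (op_norm R * norm x)
      = real (Suc j) * op_norm R ^ (Suc j - 1) * c * norm x"
    by (cases j) (simp_all add: algebra_simps)
  ultimately show ?case
    unfolding commutator_Suc[of j x] c_def[symmetric]
    by (smt (verit) norm_triangle_ineq)
qed (simp add: commutator_def)

lemma op_norm_ad_relpow_R_le:
  assumes bounded: "bounded_op (ad R (closure A))"
  shows "op_norm (ad (R ^^ m) (closure A)) \<le> real m * op_norm R ^ (m - 1) * op_norm (ad R (closure A))"
    (is "_ \<le> ?K")
proof (rule op_norm_le[OF is_op_ad])
  have core: "(r ^^ k) p \<in> Domain (closure A)" if "p \<in> range (r ^^ m)" for k p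
    using that funpow_r_core_in_Domain_A by blast
  show "0 \<le> ?K"
    using op_norm_R_nonneg op_norm_nonneg[OF is_op_ad_R bounded] by simp
  fix x y
  assume xy: "(x, y) \<in> ad (R ^^ m) (closure A)"
  obtain y' where y': "(x, y') \<in> closure (ad (R ^^ m) (closure A))" "norm y' \<le> ?K * norm x"
  proof (rule closure_graph_bound_from_dense_core[where D = "range (r ^^ m)" and f = "commutator m"])
    show "p - q \<in> range (r ^^ m)" if "p \<in> range (r ^^ m)" "q \<in> range (r ^^ m)" for p q
      using that by (auto simp flip: funpow_r_diff)
    show "(p, commutator m p) \<in> ad (R ^^ m) (closure A)" if "p \<in> range (r ^^ m)" for p
      using core[OF that, of 0] core[OF that, of m] by (simp add: ad_relpow_R_iff)
    show "commutator m (p - q) = commutator m p - commutator m q"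
      if "p \<in> range (r ^^ m)" "q \<in> range (r ^^ m)" for p q
      using core[OF that(1), of 0] core[OF that(2), of 0] core[OF that(1), of m] core[OF that(2), of m]
      by (intro commutator_diff) simp_all
    show "norm (commutator m p) \<le> ?K * norm p" if "p \<in> range (r ^^ m)" for p
      using norm_commutator_le[OF bounded core[OF that]] .
  qed (use dense_range_funpow_r \<open>0 \<le> ?K\<close> in auto)
  moreover have "(x, y) \<in> closure (ad (R ^^ m) (closure A))"
    using xy closure_subset by blast
  ultimately have "y = y'"
    using closure_ad_subset_weak_graph weak_graph_single_valued by blast
  then show "norm y \<le> ?K * norm x"
    using y'(2) by simp
qed

end

theorem lemma9:
  fixes sc :: "complex \<Rightarrow> 'a::banach \<Rightarrow> 'a"
    and ip :: "'a \<Rightarrow> 'a \<Rightarrow> complex"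
    and A S :: "('a \<times> 'a) set"
    and z :: complex and m :: nat
  assumes H: "complex_hilbert sc ip"
    and A_cl: "closable sc A" and A_dd: "densely_defined A"
    and S_cl: "closed_op sc S" and S_dd: "densely_defined S"
    and z_res: "z \<in> resolvent_set sc S"
    and dom1: "op_dom (op_pow S m) \<subseteq> op_dom (op_closure A)"
    and dom2: "op_dom (op_pow (adjoint ip S) m) \<subseteq> op_dom (adjoint ip A)"
  shows "closable sc (ad (op_inverse (op_shift sc S z)) (op_closure A)) \<and>
         densely_defined (ad (op_inverse (op_shift sc S z)) (op_closure A)) \<and>
         (bounded_op (ad (op_inverse (op_shift sc S z)) (op_closure A)) \<longrightarrow>
            op_norm (ad (op_pow (op_inverse (op_shift sc S z)) m) (op_closure A))
              \<le> real m * op_norm (op_inverse (op_shift sc S z)) ^ (m - 1)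
                 * op_norm (ad (op_inverse (op_shift sc S z)) (op_closure A)))"
proof -
  interpret resolvent_commutator sc ip S z A m
    using H A_cl S_cl S_dd z_res dom1 dom2
    by unfold_locales (simp_all add: closed_op_def op_pow_def op_closure_def op_dom_eq_Domain)
  show ?thesis
    using closable_ad[of 1] densely_defined_ad[of 1] op_norm_ad_relpow_R_le
    by (simp add: R_def op_closure_def op_pow_def)
qed

end
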